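(* Let $r>0$, $d>0$ with $d\sqrt{2}<r$, and let $X\subseteq\mathbb{R}^2$ be a bounded $r$-regular set whose boundary contains no point of $d\mathbb{Z}^2$. Let $C$ be a grey pixel of the lattice $d\mathbb{Z}^2$ having two direct neighbour pixels (pixels sharing a side with $C$) which share a vertex with each other and which are either both black or both white. Let $p$ be the vertex of $C$ that belongs to neither of these two neighbour pixels. If $q\in\partial X\cap C$, then $q\in B_d(p)$, the open ball of radius $d$ centred at $p$.
   Context: A closed set $X\subseteq\mathbb{R}^2$ is $r$-regular if for each $x\in\partial X$ there are two open balls of radius $r$, $B_r(x_b)\subseteq X$ and $B_r(x_w)\subseteq \mathbb{R}^2\setminus X$, with $\overline{B_r(x_b)}\cap\overline{B_r(x_w)}=\{x\}$. Pixels are the closed squares $[dk,d(k+1)]\times[dl,d(l+1)]$, $k,l\in\mathbb{Z}$. A pixel $P$ is black if $\mathrm{area}(X\cap P)=d^2$, white if $\mathrm{area}(X\cap P)=0$, and grey otherwise. *)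

theory Defs
  imports "HOL-Analysis.Analysis"
begin

text \<open>Points of the plane are pairs of reals (Euclidean metric on real \<times> real).\<close>

definition r_regular :: "real \<Rightarrow> (real \<times> real) set \<Rightarrow> bool" where
  "r_regular r X \<longleftrightarrow> closed X \<and>
     (\<forall>x\<in>frontier X. \<exists>xb xw. ball xb r \<subseteq> X \<and> ball xw r \<subseteq> - X \<and>
         cball xb r \<inter> cball xw r = {x})"

definition pixel :: "real \<Rightarrow> int \<Rightarrow> int \<Rightarrow> (real \<times> real) set" where
  "pixel d k l = {d * of_int k .. d * (of_int k + 1)} \<times> {d * of_int l .. d * (of_int l + 1)}"

definition pixel_vertices :: "real \<Rightarrow> int \<Rightarrow> int \<Rightarrow> (real \<times> real) set" where
  "pixel_vertices d k l = {(d * of_int k, d * of_int l), (d * (of_int k + 1), d * of_int l),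
                          (d * of_int k, d * (of_int l + 1)), (d * (of_int k + 1), d * (of_int l + 1))}"

definition black_pixel :: "(real \<times> real) set \<Rightarrow> real \<Rightarrow> int \<Rightarrow> int \<Rightarrow> bool" where
  "black_pixel X d k l \<longleftrightarrow> measure lebesgue (X \<inter> pixel d k l) = d\<^sup>2"

definition white_pixel :: "(real \<times> real) set \<Rightarrow> real \<Rightarrow> int \<Rightarrow> int \<Rightarrow> bool" where
  "white_pixel X d k l \<longleftrightarrow> measure lebesgue (X \<inter> pixel d k l) = 0"

definition grey_pixel :: "(real \<times> real) set \<Rightarrow> real \<Rightarrow> int \<Rightarrow> int \<Rightarrow> bool" where
  "grey_pixel X d k l \<longleftrightarrow> \<not> black_pixel X d k l \<and> \<not> white_pixel X d k l"

definition direct_neighbour :: "int \<Rightarrow> int \<Rightarrow> int \<Rightarrow> int \<Rightarrow> bool" where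
  "direct_neighbour k l k' l' \<longleftrightarrow> \<bar>k' - k\<bar> + \<bar>l' - l\<bar> = 1"

end

theory Submission
  imports Defs
begin

(* Suppose q is a point of the frontier in C with dist p q \<ge> d.  As both neighbours of C have
   the same colour, the tangent ball of radius r at q on the opposite side of the frontier
   contains no interior point of them, and being open it misses them altogether.  Placing p at the
   origin and C on [0,d]\<^sup>2 by a reflection, q lies in C outside the disc of radius d, and a circle
   of radius r > d * sqrt 2 through such a point q (which is not one of the lattice points (d,0),
   (0,d)) always encloses a point of [d,2d] \<times> [0,d] or of [0,d] \<times> [d,2d]: either q can be
   moved horizontally or vertically into a neighbour while staying inside the circle, or one of
   (d,0), (0,d) lies strictly inside it. *)

lemma power2_diff_less:
  fixes u s :: real
  assumes "0 < s" and "s < 2 * u"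
  shows "(u - s)\<^sup>2 < u\<^sup>2"
proof -
  have "(u - s)\<^sup>2 = u\<^sup>2 - s * (2 * u - s)" by (simp add: power2_eq_square algebra_simps)
  moreover have "s * (2 * u - s) > 0" using assms by simp
  ultimately show ?thesis by linarith
qed

lemma sum_gt_if_sum_squares_ge:
  fixes a b d :: real
  assumes "0 < a" and "0 < b" and "0 \<le> d" and "d\<^sup>2 \<le> a\<^sup>2 + b\<^sup>2"
  shows "d < a + b"
proof -
  have "a\<^sup>2 + b\<^sup>2 < (a + b)\<^sup>2" using assms by (simp add: power2_sum)
  then have "d\<^sup>2 < (a + b)\<^sup>2" using assms(4) by linarith
  then show ?thesis using assms by (simp add: power_less_imp_less_base)
qed

lemma corner_inside_circle:
  fixes a b d r cx cy :: real
  assumes d: "0 < d" and r: "2 * d\<^sup>2 < r\<^sup>2"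
    and a: "0 < a" "a \<le> d" and b: "0 < b" "b \<le> d" and ab: "d\<^sup>2 \<le> a\<^sup>2 + b\<^sup>2"
    and c: "(cx - a)\<^sup>2 + (cy - b)\<^sup>2 = r\<^sup>2"
    and cx: "cx - a \<le> (d - a) / 2" and cy: "cy - b \<le> (d - b) / 2"
  shows "(cx - d)\<^sup>2 + cy\<^sup>2 < r\<^sup>2 \<or> cx\<^sup>2 + (cy - d)\<^sup>2 < r\<^sup>2"
proof -
  have "cx * (d - a) > cy * b \<or> cy * (d - b) > cx * a"
  proof (cases "cx \<ge> 0 \<and> cy \<ge> 0")
    case True
    \<comment> \<open>impossible: the centre would then be within distance \<open>d * sqrt 2 < r\<close> of \<open>(a, b)\<close>\<close>
    have "(cx - a)\<^sup>2 \<le> d\<^sup>2" "(cy - b)\<^sup>2 \<le> d\<^sup>2"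
      using True a b cx cy by (auto intro!: power2_le_iff_abs_le[THEN iffD2])
    then show ?thesis using c r by linarith
  next
    case False
    show ?thesis
    proof (rule ccontr)
      assume "\<not> ?thesis"
      then have h1: "(-cy) * b \<le> (-cx) * (d - a)" and h2: "(-cx) * a \<le> (-cy) * (d - b)" by auto
      have neg: "cx < 0 \<and> cy < 0"
      proof (rule ccontr)
        assume "\<not> (cx < 0 \<and> cy < 0)"
        then consider "cx \<ge> 0" "cy < 0" | "cx < 0" "cy \<ge> 0" using False by linarith
        then show False
        proof cases
          case 1
          then have "(-cy) * b > 0" "(-cx) * (d - a) \<le> 0" using a b by (simp_all add: mult_neg_pos)
          then show False using h1 by linarith
        next
          case 2
          then have "(-cx) * a > 0" "(-cy) * (d - b) \<le> 0" using a b by (simp_all add: mult_neg_pos)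
          then show False using h2 by linarith
        qed
      qed
      have "((-cy) * b) * ((-cx) * a) \<le> ((-cx) * (d - a)) * ((-cy) * (d - b))"
        using neg a by (intro mult_mono[OF h1 h2]) (auto intro: mult_nonpos_nonneg)
      then have "(cx * cy) * (a * b) \<le> (cx * cy) * ((d - a) * (d - b))" by (simp add: algebra_simps)
      then have "a * b \<le> (d - a) * (d - b)" using neg by (simp add: mult_neg_neg)
      then have "d * (a + b) \<le> d * d" by (simp add: algebra_simps)
      then show False using sum_gt_if_sum_squares_ge[OF a(1) b(1) _ ab] d by simp
    qed
  qed
  moreover have "(cx - d)\<^sup>2 + cy\<^sup>2 - r\<^sup>2 = d\<^sup>2 - (a\<^sup>2 + b\<^sup>2) - 2 * (cx * (d - a) - cy * b)"
    and "cx\<^sup>2 + (cy - d)\<^sup>2 - r\<^sup>2 = d\<^sup>2 - (a\<^sup>2 + b\<^sup>2) - 2 * (cy * (d - b) - cx * a)"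
    using c by (simp_all add: power2_eq_square algebra_simps)
  ultimately show ?thesis using ab by (smt (verit))
qed

lemma circle_through_far_point_meets_neighbours:
  fixes a b d r cx cy :: real
  assumes d: "0 < d" and r: "2 * d\<^sup>2 < r\<^sup>2"
    and a: "0 \<le> a" "a \<le> d" and b: "0 \<le> b" "b \<le> d" and ab: "d\<^sup>2 \<le> a\<^sup>2 + b\<^sup>2"
    and not_corner: "(a, b) \<noteq> (d, 0)" "(a, b) \<noteq> (0, d)"
    and c: "(cx - a)\<^sup>2 + (cy - b)\<^sup>2 = r\<^sup>2"
  obtains x y where "(cx - x)\<^sup>2 + (cy - y)\<^sup>2 < r\<^sup>2"
    and "d \<le> x \<and> x \<le> 2 * d \<and> 0 \<le> y \<and> y \<le> d \<or> 0 \<le> x \<and> x \<le> d \<and> d \<le> y \<and> y \<le> 2 * d"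
proof -
  have a_pos: "0 < a"
  proof (rule ccontr)
    assume "\<not> 0 < a"
    then have "a = 0" using a by simp
    then have "d\<^sup>2 \<le> b\<^sup>2" using ab by simp
    then have "d \<le> b" using b(1) by (rule power2_le_imp_le)
    then show False using not_corner \<open>a = 0\<close> b by simp
  qed
  have b_pos: "0 < b"
  proof (rule ccontr)
    assume "\<not> 0 < b"
    then have "b = 0" using b by simp
    then have "d\<^sup>2 \<le> a\<^sup>2" using ab by simp
    then have "d \<le> a" using a(1) by (rule power2_le_imp_le)
    then show False using not_corner \<open>b = 0\<close> a by simp
  qed
  consider "cx - a > (d - a) / 2" | "cy - b > (d - b) / 2"
    | "cx - a \<le> (d - a) / 2" "cy - b \<le> (d - b) / 2" by linarith
  then show thesis
  proof cases
    case 1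
    define s where "s = max (d - a) (min d (cx - a))"
    have "0 < s" "s < 2 * (cx - a)" using 1 a_pos a d unfolding s_def by auto
    then have "(cx - (a + s))\<^sup>2 < (cx - a)\<^sup>2"
      using power2_diff_less[of s "cx - a"] by (simp add: algebra_simps)
    then have "(cx - (a + s))\<^sup>2 + (cy - b)\<^sup>2 < r\<^sup>2" using c by linarith
    moreover have "d \<le> a + s" "a + s \<le> 2 * d" using a d unfolding s_def by auto
    ultimately show thesis using that b by blast
  next
    case 2
    define s where "s = max (d - b) (min d (cy - b))"
    have "0 < s" "s < 2 * (cy - b)" using 2 b_pos b d unfolding s_def by auto
    then have "(cy - (b + s))\<^sup>2 < (cy - b)\<^sup>2"
      using power2_diff_less[of s "cy - b"] by (simp add: algebra_simps)
    then have "(cx - a)\<^sup>2 + (cy - (b + s))\<^sup>2 < r\<^sup>2" using c by linarith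
    moreover have "d \<le> b + s" "b + s \<le> 2 * d" using b d unfolding s_def by auto
    ultimately show thesis using that a by blast
  next
    case 3
    then have "(cx - d)\<^sup>2 + (cy - 0)\<^sup>2 < r\<^sup>2 \<or> (cx - 0)\<^sup>2 + (cy - d)\<^sup>2 < r\<^sup>2"
      using corner_inside_circle[OF d r a_pos a(2) b_pos b(2) ab c] by simp
    then show thesis using that d by fastforce
  qed
qed

lemma power2_dist_Pair:
  fixes x y x' y' :: real
  shows "(dist (x, y) (x', y'))\<^sup>2 = (x - x')\<^sup>2 + (y - y')\<^sup>2"
  by (simp add: dist_Pair_Pair dist_real_def)

lemma ball_through_far_point_meets_neighbours:
  fixes c q :: "real \<times> real"
  assumes d: "0 < d" and r: "d * sqrt 2 < r" and q: "q \<in> {0..d} \<times> {0..d}" and far: "d \<le> norm q"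
    and not_corner: "q \<noteq> (d, 0)" "q \<noteq> (0, d)" and c: "dist c q = r"
  obtains z where "z \<in> ball c r" and "z \<in> {d..2 * d} \<times> {0..d} \<union> {0..d} \<times> {d..2 * d}"
proof -
  obtain a b where q_ab: "q = (a, b)" by fastforce
  obtain cx cy where c_xy: "c = (cx, cy)" by fastforce
  have "(d * sqrt 2)\<^sup>2 < r\<^sup>2" using r d by (intro power_strict_mono) auto
  then have r2: "2 * d\<^sup>2 < r\<^sup>2" by (simp add: power_mult_distrib)
  have "d\<^sup>2 \<le> (norm q)\<^sup>2" using far d by (intro power_mono) auto
  then have ab: "d\<^sup>2 \<le> a\<^sup>2 + b\<^sup>2" by (simp add: q_ab norm_Pair)
  have c2: "(cx - a)\<^sup>2 + (cy - b)\<^sup>2 = r\<^sup>2" using c by (simp flip: power2_dist_Pair add: c_xy q_ab)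
  have "0 \<le> a" "a \<le> d" "0 \<le> b" "b \<le> d" "(a, b) \<noteq> (d, 0)" "(a, b) \<noteq> (0, d)"
    using q not_corner by (auto simp: q_ab)
  then obtain x y where xy: "(cx - x)\<^sup>2 + (cy - y)\<^sup>2 < r\<^sup>2"
    and "d \<le> x \<and> x \<le> 2 * d \<and> 0 \<le> y \<and> y \<le> d \<or> 0 \<le> x \<and> x \<le> d \<and> d \<le> y \<and> y \<le> 2 * d"
    using circle_through_far_point_meets_neighbours[OF d r2 _ _ _ _ ab _ _ c2] by blast
  moreover have "dist c (x, y) < r"
  proof (rule power2_less_imp_less)
    show "(dist c (x, y))\<^sup>2 < r\<^sup>2" using xy by (simp add: c_xy power2_dist_Pair)
    show "0 \<le> r" using c by auto
  qed
  ultimately show thesis using that[of "(x, y)"] by auto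
qed

(* The reflection mapping [0,d]\<^sup>2 onto the pixel with vertex p, for signs sx, sy = \<plusminus>1. *)
definition corner_chart :: "real \<times> real \<Rightarrow> real \<Rightarrow> real \<Rightarrow> real \<times> real \<Rightarrow> real \<times> real" where
  "corner_chart p sx sy u = (fst p + sx * fst u, snd p + sy * snd u)"

lemma dist_corner_chart:
  assumes "\<bar>sx\<bar> = 1" and "\<bar>sy\<bar> = 1"
  shows "dist (corner_chart p sx sy u) (corner_chart p sx sy v) = dist u v"
proof -
  have "\<bar>sx * a - sx * b\<bar> = \<bar>a - b\<bar>" "\<bar>sy * a - sy * b\<bar> = \<bar>a - b\<bar>" for a b
    using assms by (simp_all flip: right_diff_distrib add: abs_mult)
  then show ?thesis by (simp add: corner_chart_def dist_Pair_Pair dist_real_def dist_prod_def)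
qed

lemma surj_corner_chart:
  assumes "\<bar>sx\<bar> = 1" and "\<bar>sy\<bar> = 1"
  shows "surj (corner_chart p sx sy)"
proof (rule surjI)
  have "sx * sx = 1" "sy * sy = 1" using assms by (metis abs_mult_self_eq mult_1)+
  then show "corner_chart p sx sy (sx * (fst v - fst p), sy * (snd v - snd p)) = v" for v
    by (simp add: corner_chart_def mult.assoc[symmetric])
qed

lemma signed_offset_in_cell_iff:
  fixes d x :: real
  assumes "s = 1 \<or> s = -1"
  shows "d * of_int (if s = 1 then k else k + 1) + of_int s * x \<in> {d * of_int k .. d * (of_int k + 1)}
    \<longleftrightarrow> x \<in> {0..d}"
  using assms by (auto simp: algebra_simps)

lemma signed_offset_in_next_cell_iff:
  fixes d x :: real
  assumes "s = 1 \<or> s = -1"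
  shows "d * of_int (if s = 1 then k else k + 1) + of_int s * x \<in> {d * of_int (k + s) .. d * (of_int (k + s) + 1)}
    \<longleftrightarrow> x \<in> {d..2 * d}"
  using assms by (auto simp: algebra_simps)

lemma corner_chart_in_pixel_iff:
  fixes d :: real
  assumes "sx = 1 \<or> sx = -1" and "sy = 1 \<or> sy = -1"
    and p: "p = (d * of_int (if sx = 1 then k else k + 1), d * of_int (if sy = 1 then l else l + 1))"
  shows "corner_chart p (of_int sx) (of_int sy) u \<in> pixel d k l \<longleftrightarrow> u \<in> {0..d} \<times> {0..d}"
    and "corner_chart p (of_int sx) (of_int sy) u \<in> pixel d (k + sx) l \<longleftrightarrow> u \<in> {d..2 * d} \<times> {0..d}"
    and "corner_chart p (of_int sx) (of_int sy) u \<in> pixel d k (l + sy) \<longleftrightarrow> u \<in> {0..d} \<times> {d..2 * d}"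
  using signed_offset_in_cell_iff[OF assms(1), of d k "fst u"] signed_offset_in_cell_iff[OF assms(2), of d l "snd u"]
    signed_offset_in_next_cell_iff[OF assms(1), of d k "fst u"] signed_offset_in_next_cell_iff[OF assms(2), of d l "snd u"]
  by (auto simp: corner_chart_def pixel_def p mem_Times_iff)

lemma tangent_ball_meets_neighbour_pixel:
  fixes d r :: real and c p q :: "real \<times> real" and sx sy :: int
  assumes d: "0 < d" and r: "d * sqrt 2 < r"
    and sx: "sx = 1 \<or> sx = -1" and sy: "sy = 1 \<or> sy = -1"
    and p: "p = (d * of_int (if sx = 1 then k else k + 1), d * of_int (if sy = 1 then l else l + 1))"
    and q: "q \<in> pixel d k l" and far: "d \<le> dist p q"
    and off_lattice: "\<forall>i j :: int. q \<noteq> (d * of_int i, d * of_int j)"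
    and c: "dist c q = r"
  shows "ball c r \<inter> (pixel d (k + sx) l \<union> pixel d k (l + sy)) \<noteq> {}"
proof -
  let ?chart = "corner_chart p (of_int sx) (of_int sy)"
  have signs: "\<bar>of_int sx :: real\<bar> = 1" "\<bar>of_int sy :: real\<bar> = 1" using sx sy by auto
  obtain u v where u: "q = ?chart u" and v: "c = ?chart v"
    using surj_corner_chart[OF signs] by (metis surjD)
  have "u \<in> {0..d} \<times> {0..d}" using q corner_chart_in_pixel_iff(1)[OF sx sy p] u by simp
  moreover have "d \<le> norm u"
    using far dist_corner_chart[OF signs, of p 0 u] by (simp add: u corner_chart_def dist_norm)
  moreover have "u \<noteq> (d, 0)" "u \<noteq> (0, d)"
  proof -
    have "?chart (d, 0) = (d * of_int ((if sx = 1 then k else k + 1) + sx), d * of_int (if sy = 1 then l else l + 1))"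
      and "?chart (0, d) = (d * of_int (if sx = 1 then k else k + 1), d * of_int ((if sy = 1 then l else l + 1) + sy))"
      by (simp_all add: corner_chart_def p algebra_simps)
    then show "u \<noteq> (d, 0)" "u \<noteq> (0, d)" using off_lattice u by metis+
  qed
  moreover have "dist v u = r" using c dist_corner_chart[OF signs] by (simp add: u v)
  ultimately obtain z where "z \<in> ball v r" and "z \<in> {d..2 * d} \<times> {0..d} \<union> {0..d} \<times> {d..2 * d}"
    using ball_through_far_point_meets_neighbours[OF d r] by blast
  then have "?chart z \<in> ball c r \<inter> (pixel d (k + sx) l \<union> pixel d k (l + sy))"
    using corner_chart_in_pixel_iff(2,3)[OF sx sy p] dist_corner_chart[OF signs] by (auto simp: v)
  then show ?thesis by blast
qed

lemma pixel_cbox: "pixel d k l = cbox (d * of_int k, d * of_int l) (d * (of_int k + 1), d * (of_int l + 1))"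
  unfolding pixel_def cbox_Pair_eq by simp

lemma box_pixel_nonempty:
  fixes d :: real
  assumes "0 < d"
  shows "box (d * of_int k, d * of_int l) (d * (of_int k + 1), d * (of_int l + 1)) \<noteq> {}"
proof -
  have "(d * (of_int k + 1 / 2), d * (of_int l + 1 / 2))
      \<in> box (d * of_int k, d * of_int l) (d * (of_int k + 1), d * (of_int l + 1))"
    using assms by (simp add: mem_box Basis_prod_def ball_Un algebra_simps)
  then show ?thesis by blast
qed

lemma measure_pixel: "0 < d \<Longrightarrow> measure lebesgue (pixel d k l) = d\<^sup>2"
  unfolding pixel_cbox by (simp add: content_Pair power2_eq_square algebra_simps)

lemma open_Int_cbox_eq_empty_if_negligible:
  fixes S :: "'a::euclidean_space set"
  assumes "box a b \<noteq> {}" and "open S" and "negligible (S \<inter> cbox a b)"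
  shows "S \<inter> cbox a b = {}"
proof -
  have "S \<inter> box a b \<subseteq> S \<inter> cbox a b" using box_subset_cbox by blast
  then have "negligible (S \<inter> box a b)" by (rule negligible_subset[OF assms(3)])
  moreover have "open (S \<inter> box a b)" using assms(2) open_box by (rule open_Int)
  ultimately have "S \<inter> box a b = {}" using open_not_negligible by blast
  then have "S \<inter> closure (box a b) = {}" by (simp add: open_Int_closure_eq_empty[OF assms(2)])
  then show ?thesis by (simp add: closure_box[OF assms(1)])
qed

lemma negligible_pixel_Diff_if_black:
  assumes "0 < d" and "X \<in> sets lebesgue" and "black_pixel X d k l"
  shows "negligible (pixel d k l - X)"
proof -
  have P: "pixel d k l \<in> lmeasurable" by (simp add: pixel_cbox)
  have "measure lebesgue (pixel d k l - X \<inter> pixel d k l)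
      = measure lebesgue (pixel d k l) - measure lebesgue (X \<inter> pixel d k l)"
    using P assms(2) by (intro measure_Diff) (auto simp: fmeasurable_def)
  also have "\<dots> = 0" using assms by (simp add: measure_pixel black_pixel_def)
  finally have "measure lebesgue (pixel d k l - X) = 0" by (simp add: Diff_Int)
  moreover have "pixel d k l - X \<in> lmeasurable" using P assms(2) by (rule fmeasurable_Diff)
  ultimately show ?thesis by (simp add: negligible_iff_measure)
qed

lemma negligible_Int_pixel_if_white:
  assumes "X \<in> sets lebesgue" and "white_pixel X d k l"
  shows "negligible (X \<inter> pixel d k l)"
proof -
  have "X \<inter> pixel d k l \<in> lmeasurable"
    using fmeasurable_Int_fmeasurable[of "pixel d k l" lebesgue X] assms(1)
    by (simp add: pixel_cbox Int_commute)
  then show ?thesis using assms(2) by (simp add: negligible_iff_measure white_pixel_def)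
qed

lemma open_outside_misses_black_pixel:
  assumes "0 < d" and "X \<in> sets lebesgue" and "black_pixel X d k l" and "open S" and "S \<subseteq> - X"
  shows "S \<inter> pixel d k l = {}"
proof -
  have "negligible (S \<inter> pixel d k l)"
    using negligible_pixel_Diff_if_black[OF assms(1-3)] by (rule negligible_subset) (use assms(5) in blast)
  then show ?thesis
    unfolding pixel_cbox using assms(1,4) by (intro open_Int_cbox_eq_empty_if_negligible box_pixel_nonempty)
qed

lemma open_inside_misses_white_pixel:
  assumes "0 < d" and "X \<in> sets lebesgue" and "white_pixel X d k l" and "open S" and "S \<subseteq> X"
  shows "S \<inter> pixel d k l = {}"
proof -
  have "negligible (S \<inter> pixel d k l)"
    using negligible_Int_pixel_if_white[OF assms(2,3)] by (rule negligible_subset) (use assms(5) in blast)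
  then show ?thesis
    unfolding pixel_cbox using assms(1,4) by (intro open_Int_cbox_eq_empty_if_negligible box_pixel_nonempty)
qed

lemma r_regular_frontier_tangent_balls:
  assumes "r_regular r X" and "q \<in> frontier X"
  obtains xb xw where "ball xb r \<subseteq> X" and "ball xw r \<subseteq> - X" and "dist xb q = r" and "dist xw q = r"
proof -
  obtain xb xw where inside: "ball xb r \<subseteq> X" and outside: "ball xw r \<subseteq> - X"
    and touch: "cball xb r \<inter> cball xw r = {q}"
    using assms unfolding r_regular_def by blast
  have "q \<notin> ball xb r"
    using interior_maximal[OF inside open_ball] assms(2) by (auto simp: frontier_def)
  moreover have "q \<notin> ball xw r"
    using open_Int_closure_eq_empty[of "ball xw r" X] outside assms(2) by (auto simp: frontier_def)
  moreover have "dist xb q \<le> r" "dist xw q \<le> r" using touch by auto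
  ultimately show thesis using that inside outside by (simp add: dist_commute)
qed

lemma tangent_ball_misses_uniform_pixels:
  assumes d: "0 < d" and X: "r_regular r X" and q: "q \<in> frontier X"
    and uniform: "(black_pixel X d k1 l1 \<and> black_pixel X d k2 l2) \<or>
                  (white_pixel X d k1 l1 \<and> white_pixel X d k2 l2)"
  obtains c where "dist c q = r" and "ball c r \<inter> pixel d k1 l1 = {}" and "ball c r \<inter> pixel d k2 l2 = {}"
proof -
  have "X \<in> sets lebesgue" using X unfolding r_regular_def by (simp add: borel_closed)
  moreover obtain xb xw where "ball xb r \<subseteq> X" "ball xw r \<subseteq> - X" "dist xb q = r" "dist xw q = r"
    using r_regular_frontier_tangent_balls[OF X q] .
  ultimately show thesis
    using uniform that open_outside_misses_black_pixel[OF d] open_inside_misses_white_pixel[OF d]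
    by (metis open_ball)
qed

definition corner_indices :: "int \<Rightarrow> int \<Rightarrow> (int \<times> int) set" where
  "corner_indices k l = {(k, l), (k + 1, l), (k, l + 1), (k + 1, l + 1)}"

lemma pixel_vertices_eq_image:
  "pixel_vertices d k l = (\<lambda>(i, j). (d * of_int i, d * of_int j)) ` corner_indices k l"
  unfolding pixel_vertices_def corner_indices_def by auto

lemma lattice_point_in_pixel_iff:
  fixes d :: real
  assumes "0 < d"
  shows "(d * of_int i, d * of_int j) \<in> pixel d k l \<longleftrightarrow> k \<le> i \<and> i \<le> k + 1 \<and> l \<le> j \<and> j \<le> l + 1"
proof -
  have "d * of_int m \<le> d * (of_int n + 1) \<longleftrightarrow> m \<le> n + 1" for m n :: int
    using assms by (metis mult_le_cancel_left_pos of_int_add of_int_le_iff of_int_1)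
  then show ?thesis using assms by (simp add: pixel_def)
qed

lemma corner_indices_Int_nonempty_imp_close:
  assumes "corner_indices k1 l1 \<inter> corner_indices k2 l2 \<noteq> {}"
  shows "\<bar>k1 - k2\<bar> \<le> 1" and "\<bar>l1 - l2\<bar> \<le> 1"
  using assms unfolding corner_indices_def by auto

lemma neighbours_sharing_vertex:
  fixes k l k1 l1 k2 l2 i j :: int
  assumes n1: "direct_neighbour k l k1 l1" and n2: "direct_neighbour k l k2 l2"
    and distinct: "(k1, l1) \<noteq> (k2, l2)"
    and shared: "corner_indices k1 l1 \<inter> corner_indices k2 l2 \<noteq> {}" and ij: "(i, j) \<in> corner_indices k l"
    and out1: "\<not> (k1 \<le> i \<and> i \<le> k1 + 1 \<and> l1 \<le> j \<and> j \<le> l1 + 1)"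
    and out2: "\<not> (k2 \<le> i \<and> i \<le> k2 + 1 \<and> l2 \<le> j \<and> j \<le> l2 + 1)"
  obtains sx sy where "sx = 1 \<or> sx = -1" and "sy = 1 \<or> sy = -1"
    and "(k1, l1) = (k + sx, l) \<and> (k2, l2) = (k, l + sy) \<or> (k1, l1) = (k, l + sy) \<and> (k2, l2) = (k + sx, l)"
    and "i = (if sx = 1 then k else k + 1)" and "j = (if sy = 1 then l else l + 1)"
proof -
  have close: "\<bar>k1 - k2\<bar> \<le> 1" "\<bar>l1 - l2\<bar> \<le> 1"
    using corner_indices_Int_nonempty_imp_close[OF shared] by auto
  have i: "i = k \<or> i = k + 1" and j: "j = l \<or> j = l + 1"
    using ij unfolding corner_indices_def by auto
  have unit: "\<bar>k1 - k\<bar> + \<bar>l1 - l\<bar> = 1" "\<bar>k2 - k\<bar> + \<bar>l2 - l\<bar> = 1"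
    using n1 n2 unfolding direct_neighbour_def by auto
  have "l1 = l \<and> k2 = k \<or> k1 = k \<and> l2 = l"
    using unit close distinct by (simp add: abs_if split: if_splits)
  then show thesis
  proof
    assume "l1 = l \<and> k2 = k"
    then show thesis using that[of "k1 - k" "l2 - l"] unit i j out1 out2 by auto
  next
    assume "k1 = k \<and> l2 = l"
    then show thesis using that[of "k2 - k" "l1 - l"] unit i j out1 out2 by auto
  qed
qed

lemma pixel_vertices_Int_eq_empty_iff:
  fixes d :: real
  assumes "d \<noteq> 0"
  shows "pixel_vertices d k1 l1 \<inter> pixel_vertices d k2 l2 = {} \<longleftrightarrow>
    corner_indices k1 l1 \<inter> corner_indices k2 l2 = {}"
proof -
  have "inj (\<lambda>(i, j). (d * of_int i :: real, d * of_int j :: real))"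
    using assms by (auto simp: inj_def)
  then show ?thesis unfolding pixel_vertices_eq_image by (simp flip: image_Int)
qed

lemma vertex_opposite_to_neighbours:
  fixes d :: real
  assumes d: "0 < d"
    and "direct_neighbour k l k1 l1" and "direct_neighbour k l k2 l2" and "(k1, l1) \<noteq> (k2, l2)"
    and "pixel_vertices d k1 l1 \<inter> pixel_vertices d k2 l2 \<noteq> {}"
    and p: "p \<in> pixel_vertices d k l" and "p \<notin> pixel d k1 l1" and "p \<notin> pixel d k2 l2"
  obtains sx sy where "sx = 1 \<or> sx = -1" and "sy = 1 \<or> sy = -1"
    and "(k1, l1) = (k + sx, l) \<and> (k2, l2) = (k, l + sy) \<or> (k1, l1) = (k, l + sy) \<and> (k2, l2) = (k + sx, l)"
    and "p = (d * of_int (if sx = 1 then k else k + 1), d * of_int (if sy = 1 then l else l + 1))"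
proof -
  obtain i j where p_ij: "p = (d * of_int i, d * of_int j)" and ij: "(i, j) \<in> corner_indices k l"
    using p unfolding pixel_vertices_eq_image by auto
  have shared: "corner_indices k1 l1 \<inter> corner_indices k2 l2 \<noteq> {}"
    using assms(5) pixel_vertices_Int_eq_empty_iff[of d] d by simp
  have "\<not> (k1 \<le> i \<and> i \<le> k1 + 1 \<and> l1 \<le> j \<and> j \<le> l1 + 1)"
    and "\<not> (k2 \<le> i \<and> i \<le> k2 + 1 \<and> l2 \<le> j \<and> j \<le> l2 + 1)"
    using assms(7,8) unfolding p_ij lattice_point_in_pixel_iff[OF d] by simp_all
  then obtain sx sy where "sx = 1 \<or> sx = -1" "sy = 1 \<or> sy = -1"
    "(k1, l1) = (k + sx, l) \<and> (k2, l2) = (k, l + sy) \<or> (k1, l1) = (k, l + sy) \<and> (k2, l2) = (k + sx, l)"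
    "i = (if sx = 1 then k else k + 1)" "j = (if sy = 1 then l else l + 1)"
    using neighbours_sharing_vertex[OF assms(2-4) shared ij] by blast
  then show thesis using that p_ij by blast
qed

theorem lemma5p1:
  fixes r d :: real and X :: "(real \<times> real) set"
    and k l k1 l1 k2 l2 :: int and p q :: "real \<times> real"
  assumes "r > 0" and "d > 0" and "d * sqrt 2 < r"
    and "bounded X" and "r_regular r X"
    and "\<forall>i j :: int. (d * of_int i, d * of_int j) \<notin> frontier X"
    and "grey_pixel X d k l"
    and "direct_neighbour k l k1 l1" and "direct_neighbour k l k2 l2"
    and "(k1, l1) \<noteq> (k2, l2)"
    and "pixel_vertices d k1 l1 \<inter> pixel_vertices d k2 l2 \<noteq> {}"
    and "(black_pixel X d k1 l1 \<and> black_pixel X d k2 l2) \<or>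
         (white_pixel X d k1 l1 \<and> white_pixel X d k2 l2)"
    and "p \<in> pixel_vertices d k l"
    and "p \<notin> pixel d k1 l1" and "p \<notin> pixel d k2 l2"
    and "q \<in> frontier X \<inter> pixel d k l"
  shows "q \<in> ball p d"
proof (rule ccontr)
  assume "q \<notin> ball p d"
  then have far: "d \<le> dist p q" by simp
  obtain sx sy where sx: "sx = 1 \<or> sx = -1" and sy: "sy = 1 \<or> sy = -1"
    and neighbours: "(k1, l1) = (k + sx, l) \<and> (k2, l2) = (k, l + sy) \<or> (k1, l1) = (k, l + sy) \<and> (k2, l2) = (k + sx, l)"
    and p: "p = (d * of_int (if sx = 1 then k else k + 1), d * of_int (if sy = 1 then l else l + 1))"
    using vertex_opposite_to_neighbours[OF assms(2,8-11,13-15)] .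
  obtain c where c: "dist c q = r"
    and misses: "ball c r \<inter> pixel d k1 l1 = {}" "ball c r \<inter> pixel d k2 l2 = {}"
    using tangent_ball_misses_uniform_pixels[OF assms(2,5)] assms(12,16) by blast
  have "ball c r \<inter> (pixel d (k + sx) l \<union> pixel d k (l + sy)) \<noteq> {}"
    using tangent_ball_meets_neighbour_pixel[OF assms(2,3) sx sy p _ far _ c] assms(6,16) by blast
  moreover have "pixel d (k + sx) l \<union> pixel d k (l + sy) = pixel d k1 l1 \<union> pixel d k2 l2"
    using neighbours by auto
  ultimately show False using misses by blast
qed

end
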